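(* Consider the $q$-composite random key predistribution scheme on $n$ sensors with key pool size $P_n$ and key ring size $K_n$, where $q$ is a fixed positive integer and $q\le K_n\le P_n$. Let $p_s$ be the probability that the key rings of two sensors share at least $q$ keys. Suppose an adversary captures a uniformly random set of $m=m(n)\ge 1$ sensors and learns all keys in their key rings, and let $p_{\textnormal{compromised}}$ denote the probability that the secure link between two non-captured sensors is compromised, conditioned on these two sensors sharing at least $q$ keys. If $$m = o\!\left(\sqrt{\frac{P_n}{K_n^2}}\right)\quad\text{and}\quad K_n=\omega(1),$$ then $$p_{\textnormal{compromised}}\sim\left(\frac{mK_n}{P_n}\right)^q\qquad\text{and}\qquad \frac{p_{\textnormal{compromised}}}{p_s}\sim q!\left(\frac{m}{K_n}\right)^q .$$
   Context: In the $q$-composite scheme, each sensor independently receives $K_n$ distinct keys chosen uniformly at random among all $K_n$-subsets of a pool of $P_n$ keys; two sensors have a secure link iff their key rings share at least $q$ keys. The secure link between two non-captured sensors is compromised iff every key shared by their key rings belongs to the key ring of at least one captured sensor. Asymptotics are as $n\to\infty$: $x_n=o(y_n)$ means $x_n/y_n\to0$, $x_n=\omega(y_n)$ means $x_n/y_n\to\infty$, and $x_n\sim y_n$ means $x_n/y_n\to 1$. *)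

theory Defs
  imports "HOL-Analysis.Analysis" "HOL-Library.Landau_Symbols"
begin

definition key_rings :: "nat \<Rightarrow> nat \<Rightarrow> nat set set" where
  "key_rings P K = {S. S \<subseteq> {..<P} \<and> card S = K}"

definition p_s :: "nat \<Rightarrow> nat \<Rightarrow> nat \<Rightarrow> real" where
  "p_s P K q =
     real (card {(A, B). A \<in> key_rings P K \<and> B \<in> key_rings P K \<and> q \<le> card (A \<inter> B)})
     / real (card (key_rings P K) ^ 2)"

text \<open>Joint outcomes: key rings A, B of the two non-captured sensors and the list Cs of
  key rings of the m captured sensors (all independent and uniform).\<close>
definition outcomes :: "nat \<Rightarrow> nat \<Rightarrow> nat \<Rightarrow> (nat set \<times> nat set \<times> nat set list) set" where
  "outcomes P K m = {(A, B, Cs). A \<in> key_rings P K \<and> B \<in> key_rings P K \<and>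
                        length Cs = m \<and> set Cs \<subseteq> key_rings P K}"

text \<open>Probability that the link between the two non-captured sensors is compromised
  (every shared key lies in some captured ring), conditioned on sharing at least q keys.\<close>
definition p_compromised :: "nat \<Rightarrow> nat \<Rightarrow> nat \<Rightarrow> nat \<Rightarrow> real" where
  "p_compromised P K q m =
     real (card {(A, B, Cs) \<in> outcomes P K m. q \<le> card (A \<inter> B) \<and> A \<inter> B \<subseteq> \<Union> (set Cs)})
     / real (card {(A, B, Cs) \<in> outcomes P K m. q \<le> card (A \<inter> B)})"

end

(* Conditioned on the key rings A and B of the two sensors, their link is compromised iff
   the m captured rings cover A \<inter> B. A fixed q-set of keys is covered with probability at
   most (mK/P)^q: take the union over the m^q ways of assigning each key to a captured ring,
   each assignment having probability at most (K/P)^q. Assigning every key to the first ring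
   that contains it makes these events disjoint, which gives the matching lower bound
   (mK/P)^q (1 - O(q/K) - O(q m K/P)). Counting triples (A, B, J) with J a j-subset of
   A \<inter> B shows p_s ~ K^(2q) / (q! P^q), and that pairs sharing more than q keys form a
   fraction at most K^2/P of the pairs sharing at least q. The hypothesis m = o(sqrt P / K)
   makes K^2/P and mK/P tend to 0, so every error factor tends to 1. *)

theory Submission
  imports Defs
begin

section \<open>Key rings and binomial ratios\<close>

lemma finite_key_rings: "finite (key_rings P K)"
  unfolding key_rings_def by (rule finite_subset[of _ "Pow {..<P}"]) auto

lemma card_key_rings: "card (key_rings P K) = P choose K"
  unfolding key_rings_def using n_subsets[of "{..<P}" K] by simp

lemma key_ringsD:
  assumes "A \<in> key_rings P K"
  shows "finite A" "A \<subseteq> {..<P}" "card A = K"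
  using assms finite_subset unfolding key_rings_def by auto

lemma card_key_rings_superset:
  assumes "T \<subseteq> {..<P}" "card T \<le> K"
  shows "card {A \<in> key_rings P K. T \<subseteq> A} = (P - card T) choose (K - card T)"
proof -
  have fin: "finite T" using assms(1) finite_subset by blast
  have "bij_betw (\<lambda>A. A - T) {A \<in> key_rings P K. T \<subseteq> A} {B. B \<subseteq> {..<P} - T \<and> card B = K - card T}"
  proof (rule bij_betw_byWitness[where f' = "\<lambda>B. B \<union> T"])
    show "(\<lambda>A. A - T) ` {A \<in> key_rings P K. T \<subseteq> A} \<subseteq> {B. B \<subseteq> {..<P} - T \<and> card B = K - card T}"
      using key_ringsD by (fastforce simp: card_Diff_subset fin)
    show "(\<lambda>B. B \<union> T) ` {B. B \<subseteq> {..<P} - T \<and> card B = K - card T} \<subseteq> {A \<in> key_rings P K. T \<subseteq> A}"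
    proof
      fix A assume "A \<in> (\<lambda>B. B \<union> T) ` {B. B \<subseteq> {..<P} - T \<and> card B = K - card T}"
      then obtain B where B: "B \<subseteq> {..<P} - T" "card B = K - card T" "A = B \<union> T" by auto
      have "card A = card B + card T"
        unfolding B(3) using B(1) fin by (intro card_Un_disjoint) (auto intro: finite_subset)
      then show "A \<in> {A \<in> key_rings P K. T \<subseteq> A}" using B assms unfolding key_rings_def by auto
    qed
  qed auto
  then have "card {A \<in> key_rings P K. T \<subseteq> A} = card {B. B \<subseteq> {..<P} - T \<and> card B = K - card T}"
    by (rule bij_betw_same_card)
  also have "\<dots> = (P - card T) choose (K - card T)"
    using n_subsets[of "{..<P} - T"] assms by (simp add: card_Diff_subset fin)
  finally show ?thesis .
qed

lemma binomial_mult_fact_real: "real (n choose k) * fact k = (\<Prod>i<k. real n - real i)"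
  by (simp add: binomial_gbinomial gbinomial_mult_fact' atLeast0LessThan)

(* (P - t choose K - t) / (P choose K) is the probability that a uniform key ring
   contains a fixed t-set of keys. *)
lemma binomial_ratio_eq_prod:
  assumes "t \<le> K" "K \<le> P"
  shows "real ((P - t) choose (K - t)) * (\<Prod>i<t. real P - real i)
       = real (P choose K) * (\<Prod>i<t. real K - real i)"
proof -
  have "real (P choose K) * (real (K choose t) * fact t) = real ((P choose K) * (K choose t)) * fact t"
    by simp
  also have "\<dots> = real ((P choose t) * ((P - t) choose (K - t))) * fact t"
    by (simp only: choose_mult[OF assms])
  also have "\<dots> = real ((P - t) choose (K - t)) * (real (P choose t) * fact t)"
    by simp
  finally show ?thesis by (simp only: binomial_mult_fact_real)
qed

lemma binomial_ratio_le:
  assumes "t \<le> K" "K \<le> P"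
  shows "real ((P - t) choose (K - t)) \<le> real (P choose K) * (real K / real P) ^ t"
proof -
  define D where "D = (\<Prod>i<t. real P - real i)"
  have D: "D > 0" unfolding D_def using assms by (intro prod_pos) auto
  have "(\<Prod>i<t. real K - real i) \<le> (\<Prod>i<t. (real P - real i) * (real K / real P))"
  proof (intro prod_mono conjI)
    fix i assume "i \<in> {..<t}"
    then have "i < P" "(real K - real i) * real P \<le> (real P - real i) * real K"
      using assms mult_right_mono[of "real K" "real P" "real i"] by (auto simp: algebra_simps)
    then show "real K - real i \<le> (real P - real i) * (real K / real P)"
      by (simp add: field_simps)
  qed (use assms in auto)
  also have "\<dots> = (real K / real P) ^ t * D"
    unfolding D_def prod.distrib by (simp add: mult.commute)
  finally have prods: "(\<Prod>i<t. real K - real i) \<le> (real K / real P) ^ t * D" .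
  have "real ((P - t) choose (K - t)) * D = real (P choose K) * (\<Prod>i<t. real K - real i)"
    unfolding D_def by (rule binomial_ratio_eq_prod[OF assms])
  also have "\<dots> \<le> real (P choose K) * ((real K / real P) ^ t * D)"
    using prods by (intro mult_left_mono) auto
  finally show ?thesis using D by (simp add: mult.assoc)
qed

lemma binomial_ratio_ge:
  assumes "t \<le> K" "K \<le> P"
  shows "real (P choose K) * ((real K - real t) / real P) ^ t \<le> real ((P - t) choose (K - t))"
proof -
  define D where "D = (\<Prod>i<t. real P - real i)"
  have D: "D > 0" unfolding D_def using assms by (intro prod_pos) auto
  have "((real K - real t) / real P) ^ t * D = (\<Prod>i<t. (real P - real i) * ((real K - real t) / real P))"
    unfolding D_def prod.distrib by (simp add: mult.commute)
  also have "\<dots> \<le> (\<Prod>i<t. real K - real i)"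
  proof (intro prod_mono conjI)
    fix i assume "i \<in> {..<t}"
    then have "i < P" "0 \<le> real P * (real t - real i) + real i * (real K - real t)"
      using assms by auto
    moreover have "(real K - real i) * real P - (real P - real i) * (real K - real t)
                 = real P * (real t - real i) + real i * (real K - real t)"
      by (simp add: algebra_simps)
    ultimately have "i < P" "(real P - real i) * (real K - real t) \<le> (real K - real i) * real P"
      by linarith+
    then show "(real P - real i) * ((real K - real t) / real P) \<le> real K - real i"
      by (simp add: field_simps)
    show "0 \<le> (real P - real i) * ((real K - real t) / real P)"
      using \<open>i < P\<close> assms by simp
  qed
  finally have prods: "((real K - real t) / real P) ^ t * D \<le> (\<Prod>i<t. real K - real i)" .
  have "real (P choose K) * (((real K - real t) / real P) ^ t * D)
      \<le> real (P choose K) * (\<Prod>i<t. real K - real i)"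
    using prods by (intro mult_left_mono) auto
  also have "\<dots> = real ((P - t) choose (K - t)) * D"
    unfolding D_def by (rule binomial_ratio_eq_prod[OF assms, symmetric])
  finally show ?thesis using D by (simp add: mult.assoc)
qed

lemma card_lists_nth_in:
  assumes "\<And>i. i < m \<Longrightarrow> finite (S i)"
  shows "card {xs. length xs = m \<and> (\<forall>i<m. xs ! i \<in> S i)} = (\<Prod>i<m. card (S i))"
proof -
  have "bij_betw (\<lambda>xs. restrict ((!) xs) {..<m})
          {xs. length xs = m \<and> (\<forall>i<m. xs ! i \<in> S i)} (Pi\<^sub>E {..<m} S)"
  proof (rule bij_betw_byWitness[where f' = "\<lambda>f. map f [0..<m]"])
    show "\<forall>xs\<in>{xs. length xs = m \<and> (\<forall>i<m. xs ! i \<in> S i)}.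
            map (restrict ((!) xs) {..<m}) [0..<m] = xs"
    proof
      fix xs assume "xs \<in> {xs. length xs = m \<and> (\<forall>i<m. xs ! i \<in> S i)}"
      then have "length xs = m" by simp
      then show "map (restrict ((!) xs) {..<m}) [0..<m] = xs"
        by (intro nth_equalityI) simp_all
    qed
    show "\<forall>f\<in>Pi\<^sub>E {..<m} S. restrict ((!) (map f [0..<m])) {..<m} = f"
    proof
      fix f assume f: "f \<in> Pi\<^sub>E {..<m} S"
      show "restrict ((!) (map f [0..<m])) {..<m} = f"
        using PiE_arb[OF f] by (auto simp: fun_eq_iff)
    qed
    show "(\<lambda>xs. restrict ((!) xs) {..<m}) ` {xs. length xs = m \<and> (\<forall>i<m. xs ! i \<in> S i)}
          \<subseteq> Pi\<^sub>E {..<m} S"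
      by (intro image_subsetI restrict_PiE) auto
    show "(\<lambda>f. map f [0..<m]) ` Pi\<^sub>E {..<m} S \<subseteq> {xs. length xs = m \<and> (\<forall>i<m. xs ! i \<in> S i)}"
      using PiE_mem by (intro image_subsetI) fastforce
  qed
  then show ?thesis
    using assms by (simp add: bij_betw_same_card card_PiE)
qed

section \<open>Captured key rings covering a set of keys\<close>

definition ring_lists :: "nat \<Rightarrow> nat \<Rightarrow> nat \<Rightarrow> nat set list set" where
  "ring_lists P K m = {Cs. length Cs = m \<and> set Cs \<subseteq> key_rings P K}"

lemma finite_ring_lists: "finite (ring_lists P K m)"
  unfolding ring_lists_def using finite_lists_length_eq[OF finite_key_rings]
  by (simp add: conj_commute)

lemma card_ring_lists: "card (ring_lists P K m) = (P choose K) ^ m"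
  unfolding ring_lists_def using card_lists_length_eq[OF finite_key_rings, of P K m]
  by (simp add: conj_commute card_key_rings)

lemma card_ring_lists_supersets:
  assumes "\<And>j. j < m \<Longrightarrow> T j \<subseteq> {..<P} \<and> card (T j) \<le> K"
  shows "card {Cs \<in> ring_lists P K m. \<forall>j<m. T j \<subseteq> Cs ! j}
       = (\<Prod>j<m. (P - card (T j)) choose (K - card (T j)))"
proof -
  have "{Cs \<in> ring_lists P K m. \<forall>j<m. T j \<subseteq> Cs ! j}
      = {Cs. length Cs = m \<and> (\<forall>j<m. Cs ! j \<in> {A \<in> key_rings P K. T j \<subseteq> A})}"
    unfolding ring_lists_def by (auto simp: all_set_conv_all_nth; metis in_set_conv_nth)
  also have "card \<dots> = (\<Prod>j<m. card {A \<in> key_rings P K. T j \<subseteq> A})"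
    by (rule card_lists_nth_in) (simp add: finite_key_rings)
  also have "\<dots> = (\<Prod>j<m. (P - card (T j)) choose (K - card (T j)))"
    using assms by (intro prod.cong refl card_key_rings_superset) auto
  finally show ?thesis .
qed

lemma card_ring_lists_supersets_le:
  assumes "\<And>j. j < m \<Longrightarrow> T j \<subseteq> {..<P} \<and> card (T j) \<le> K" "K \<le> P"
  shows "real (card {Cs \<in> ring_lists P K m. \<forall>j<m. T j \<subseteq> Cs ! j})
       \<le> real (P choose K) ^ m * (real K / real P) ^ (\<Sum>j<m. card (T j))"
proof -
  have "real (card {Cs \<in> ring_lists P K m. \<forall>j<m. T j \<subseteq> Cs ! j})
      = (\<Prod>j<m. real ((P - card (T j)) choose (K - card (T j))))"
    using assms(1) by (simp add: card_ring_lists_supersets)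
  also have "\<dots> \<le> (\<Prod>j<m. real (P choose K) * (real K / real P) ^ card (T j))"
    using assms by (intro prod_mono binomial_ratio_le conjI) auto
  also have "\<dots> = real (P choose K) ^ m * (real K / real P) ^ (\<Sum>j<m. card (T j))"
    by (simp add: prod.distrib power_sum)
  finally show ?thesis .
qed

lemma card_ring_lists_supersets_ge:
  assumes "\<And>j. j < m \<Longrightarrow> T j \<subseteq> {..<P} \<and> card (T j) \<le> t" "t \<le> K" "K \<le> P"
  shows "real (P choose K) ^ m * ((real K - real t) / real P) ^ (\<Sum>j<m. card (T j))
       \<le> real (card {Cs \<in> ring_lists P K m. \<forall>j<m. T j \<subseteq> Cs ! j})"
proof -
  have "real (P choose K) ^ m * ((real K - real t) / real P) ^ (\<Sum>j<m. card (T j))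
      = (\<Prod>j<m. real (P choose K) * ((real K - real t) / real P) ^ card (T j))"
    by (simp add: prod.distrib power_sum)
  also have "\<dots> \<le> (\<Prod>j<m. real ((P - card (T j)) choose (K - card (T j))))"
  proof (intro prod_mono conjI)
    fix j assume "j \<in> {..<m}"
    then have "card (T j) \<le> t" using assms(1) by auto
    then have "((real K - real t) / real P) ^ card (T j) \<le> ((real K - real (card (T j))) / real P) ^ card (T j)"
      using assms(2) by (intro power_mono divide_right_mono) auto
    also have "real (P choose K) * \<dots> \<le> real ((P - card (T j)) choose (K - card (T j)))"
      using \<open>card (T j) \<le> t\<close> assms by (intro binomial_ratio_ge) auto
    finally show "real (P choose K) * ((real K - real t) / real P) ^ card (T j)
        \<le> real ((P - card (T j)) choose (K - card (T j)))"
      by (simp add: mult_left_mono)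
  qed (use assms in auto)
  also have "\<dots> = real (card {Cs \<in> ring_lists P K m. \<forall>j<m. T j \<subseteq> Cs ! j})"
    using assms by (subst card_ring_lists_supersets) force+
  finally show ?thesis .
qed

lemma sum_card_fibers:
  fixes \<phi> :: "'a \<Rightarrow> nat"
  assumes "finite Q" "\<phi> \<in> Q \<rightarrow> {..<m}"
  shows "(\<Sum>j<m. card {k \<in> Q. \<phi> k = j}) = card Q"
proof -
  have "(\<Sum>j<m. \<Sum>k\<in>{k \<in> Q. \<phi> k = j}. 1) = (\<Sum>k\<in>Q. 1::nat)"
    using assms by (intro sum.group) auto
  then show ?thesis by simp
qed

(* \<phi> assigns to each key of Q a captured sensor that must hold it; a covering of Q
   is a union of such events. *)
definition assigned_lists :: "nat \<Rightarrow> nat \<Rightarrow> nat \<Rightarrow> nat set \<Rightarrow> (nat \<Rightarrow> nat) \<Rightarrow> nat set list set" where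
  "assigned_lists P K m Q \<phi> = {Cs \<in> ring_lists P K m. \<forall>k\<in>Q. k \<in> Cs ! \<phi> k}"

lemma finite_assigned_lists: "finite (assigned_lists P K m Q \<phi>)"
  unfolding assigned_lists_def using finite_ring_lists by simp

lemma assigned_lists_eq_supersets:
  assumes "\<phi> \<in> Q \<rightarrow> {..<m}"
  shows "assigned_lists P K m Q \<phi> = {Cs \<in> ring_lists P K m. \<forall>j<m. {k \<in> Q. \<phi> k = j} \<subseteq> Cs ! j}"
  using assms unfolding assigned_lists_def by auto

lemma fibers_bounded:
  fixes P :: nat
  assumes "Q \<subseteq> {..<P}"
  shows "{k \<in> Q. \<phi> k = j} \<subseteq> {..<P} \<and> card {k \<in> Q. \<phi> k = j} \<le> card Q"
proof -
  have "card {k \<in> Q. \<phi> k = j} \<le> card Q"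
    by (rule card_mono[OF finite_subset[OF assms finite_lessThan]]) blast
  then show ?thesis using assms by blast
qed

lemma card_assigned_lists_le:
  assumes "Q \<subseteq> {..<P}" "card Q \<le> K" "K \<le> P" "\<phi> \<in> Q \<rightarrow> {..<m}"
  shows "real (card (assigned_lists P K m Q \<phi>)) \<le> real (P choose K) ^ m * (real K / real P) ^ card Q"
proof -
  have fibers: "{k \<in> Q. \<phi> k = j} \<subseteq> {..<P} \<and> card {k \<in> Q. \<phi> k = j} \<le> K" for j
    using fibers_bounded[OF assms(1), of \<phi> j] assms(2) by linarith
  have "real (card (assigned_lists P K m Q \<phi>))
      \<le> real (P choose K) ^ m * (real K / real P) ^ (\<Sum>j<m. card {k \<in> Q. \<phi> k = j})"
    unfolding assigned_lists_eq_supersets[OF assms(4)]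
    by (rule card_ring_lists_supersets_le[OF fibers assms(3)])
  also have "(\<Sum>j<m. card {k \<in> Q. \<phi> k = j}) = card Q"
    by (rule sum_card_fibers[OF finite_subset[OF assms(1) finite_lessThan] assms(4)])
  finally show ?thesis .
qed

lemma card_assigned_lists_ge:
  assumes "Q \<subseteq> {..<P}" "card Q \<le> K" "K \<le> P" "\<phi> \<in> Q \<rightarrow> {..<m}"
  shows "real (P choose K) ^ m * ((real K - real (card Q)) / real P) ^ card Q
       \<le> real (card (assigned_lists P K m Q \<phi>))"
proof -
  have "(\<Sum>j<m. card {k \<in> Q. \<phi> k = j}) = card Q"
    by (rule sum_card_fibers[OF finite_subset[OF assms(1) finite_lessThan] assms(4)])
  then have "real (P choose K) ^ m * ((real K - real (card Q)) / real P) ^ card Q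
      = real (P choose K) ^ m * ((real K - real (card Q)) / real P) ^ (\<Sum>j<m. card {k \<in> Q. \<phi> k = j})"
    by simp
  also have "\<dots> \<le> real (card (assigned_lists P K m Q \<phi>))"
    unfolding assigned_lists_eq_supersets[OF assms(4)]
    by (rule card_ring_lists_supersets_ge[OF fibers_bounded[OF assms(1)] assms(2,3)])
  finally show ?thesis .
qed

lemma card_assigned_lists_extra_le:
  assumes "Q \<subseteq> {..<P}" "card Q < K" "K \<le> P" "\<phi> \<in> Q \<rightarrow> {..<m}"
    and "k \<in> Q" "i < m" "i \<noteq> \<phi> k"
  shows "real (card {Cs \<in> assigned_lists P K m Q \<phi>. k \<in> Cs ! i})
       \<le> real (P choose K) ^ m * (real K / real P) ^ (card Q + 1)"
proof -
  have fin: "finite Q" by (rule finite_subset[OF assms(1) finite_lessThan])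
  define T where "T j = {k' \<in> Q. \<phi> k' = j} \<union> (if j = i then {k} else {})" for j
  have card_T: "card (T j) = card {k' \<in> Q. \<phi> k' = j} + (if j = i then 1 else 0)" for j
    unfolding T_def using assms(5,7) fin by auto
  have "{Cs \<in> assigned_lists P K m Q \<phi>. k \<in> Cs ! i} = {Cs \<in> ring_lists P K m. \<forall>j<m. T j \<subseteq> Cs ! j}"
    unfolding assigned_lists_eq_supersets[OF assms(4)] T_def using assms(6) by auto
  moreover have "(\<Sum>j<m. card (T j)) = card Q + 1"
    unfolding card_T using sum_card_fibers[OF fin assms(4)] assms(6) by (simp add: sum.distrib)
  moreover have "T j \<subseteq> {..<P} \<and> card (T j) \<le> K" for j
    using fibers_bounded[OF assms(1), of \<phi> j] assms(1,2,5) unfolding card_T by (auto simp: T_def)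
  ultimately show ?thesis
    using card_ring_lists_supersets_le[of m T P K] assms(3) by simp
qed

lemma card_covering_lists_le:
  fixes P :: nat
  assumes "Q \<subseteq> {..<P}" "card Q \<le> K" "K \<le> P"
  shows "real (card {Cs \<in> ring_lists P K m. Q \<subseteq> \<Union>(set Cs)})
       \<le> real (P choose K) ^ m * (real m * real K / real P) ^ card Q"
proof -
  define \<Phi> where "\<Phi> = Q \<rightarrow>\<^sub>E {..<m}"
  have fin: "finite Q" by (rule finite_subset[OF assms(1) finite_lessThan])
  have fin_\<Phi>: "finite \<Phi>" and card_\<Phi>: "card \<Phi> = m ^ card Q"
    unfolding \<Phi>_def using fin by (simp_all add: finite_PiE card_PiE)
  have "{Cs \<in> ring_lists P K m. Q \<subseteq> \<Union>(set Cs)} \<subseteq> (\<Union>\<phi>\<in>\<Phi>. assigned_lists P K m Q \<phi>)"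
  proof
    fix Cs assume Cs: "Cs \<in> {Cs \<in> ring_lists P K m. Q \<subseteq> \<Union>(set Cs)}"
    have "\<exists>i. i < m \<and> k \<in> Cs ! i" if k: "k \<in> Q" for k
    proof -
      obtain C where "C \<in> set Cs" "k \<in> C" using Cs k by blast
      then show ?thesis using Cs by (auto simp: ring_lists_def in_set_conv_nth)
    qed
    then obtain f where f: "\<forall>k\<in>Q. f k < m \<and> k \<in> Cs ! f k" by metis
    then have "restrict f Q \<in> \<Phi>" "Cs \<in> assigned_lists P K m Q (restrict f Q)"
      using Cs by (auto simp: \<Phi>_def assigned_lists_def)
    then show "Cs \<in> (\<Union>\<phi>\<in>\<Phi>. assigned_lists P K m Q \<phi>)" by blast
  qed
  then have "card {Cs \<in> ring_lists P K m. Q \<subseteq> \<Union>(set Cs)} \<le> card (\<Union>\<phi>\<in>\<Phi>. assigned_lists P K m Q \<phi>)"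
    using fin_\<Phi> by (intro card_mono) (auto simp: finite_assigned_lists)
  also have "\<dots> \<le> (\<Sum>\<phi>\<in>\<Phi>. card (assigned_lists P K m Q \<phi>))"
    by (rule card_UN_le[OF fin_\<Phi>])
  finally have "real (card {Cs \<in> ring_lists P K m. Q \<subseteq> \<Union>(set Cs)})
      \<le> (\<Sum>\<phi>\<in>\<Phi>. real (card (assigned_lists P K m Q \<phi>)))"
    by (simp flip: of_nat_sum)
  also have "\<dots> \<le> (\<Sum>\<phi>\<in>\<Phi>. real (P choose K) ^ m * (real K / real P) ^ card Q)"
    using assms by (intro sum_mono card_assigned_lists_le) (auto simp: \<Phi>_def)
  also have "\<dots> = real (P choose K) ^ m * (real m * real K / real P) ^ card Q"
    by (simp add: card_\<Phi> power_mult_distrib power_divide)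
  finally show ?thesis .
qed

(* Here \<phi> k is the first captured ring containing k, which makes these events disjoint
   for distinct \<phi>. *)
definition first_cover_lists :: "nat \<Rightarrow> nat \<Rightarrow> nat \<Rightarrow> nat set \<Rightarrow> (nat \<Rightarrow> nat) \<Rightarrow> nat set list set" where
  "first_cover_lists P K m Q \<phi> = {Cs \<in> assigned_lists P K m Q \<phi>. \<forall>k\<in>Q. \<forall>i<\<phi> k. k \<notin> Cs ! i}"

lemma first_cover_lists_disjoint:
  assumes "\<phi> \<in> Q \<rightarrow>\<^sub>E {..<m}" "\<psi> \<in> Q \<rightarrow>\<^sub>E {..<m}" "\<phi> \<noteq> \<psi>"
  shows "first_cover_lists P K m Q \<phi> \<inter> first_cover_lists P K m Q \<psi> = {}"
proof (rule ccontr)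
  assume "first_cover_lists P K m Q \<phi> \<inter> first_cover_lists P K m Q \<psi> \<noteq> {}"
  then obtain Cs where Cs: "Cs \<in> first_cover_lists P K m Q \<phi>" "Cs \<in> first_cover_lists P K m Q \<psi>"
    by blast
  have "\<phi> k = \<psi> k" if "k \<in> Q" for k
  proof -
    have "\<phi> k < m" "\<psi> k < m" using assms(1,2) that by auto
    then have "k \<in> Cs ! \<phi> k" "k \<in> Cs ! \<psi> k" "\<forall>i<\<phi> k. k \<notin> Cs ! i" "\<forall>i<\<psi> k. k \<notin> Cs ! i"
      using Cs that unfolding first_cover_lists_def assigned_lists_def by auto
    then show ?thesis using linorder_neqE_nat by blast
  qed
  then have "\<phi> = \<psi>" using assms(1,2) by (metis PiE_ext)
  then show False using assms(3) by contradiction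
qed

lemma card_first_cover_lists_ge:
  fixes P :: nat
  assumes "Q \<subseteq> {..<P}" "card Q < K" "K \<le> P" "\<phi> \<in> Q \<rightarrow> {..<m}"
  shows "real (P choose K) ^ m * ((real K - real (card Q)) / real P) ^ card Q
         - real (card Q) * real m * (real (P choose K) ^ m * (real K / real P) ^ (card Q + 1))
       \<le> real (card (first_cover_lists P K m Q \<phi>))"
proof -
  define W where "W = (SIGMA k:Q. {..<\<phi> k})"
  define G where "G w = {Cs \<in> assigned_lists P K m Q \<phi>. fst w \<in> Cs ! snd w}" for w
  define B where "B = real (P choose K) ^ m * (real K / real P) ^ (card Q + 1)"
  have fin: "finite Q" by (rule finite_subset[OF assms(1) finite_lessThan])
  then have fin_W: "finite W" unfolding W_def by auto
  have "card W = (\<Sum>k\<in>Q. \<phi> k)" unfolding W_def using fin by simp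
  also have "\<dots> \<le> (\<Sum>k\<in>Q. m)" by (intro sum_mono less_imp_le) (use assms(4) in auto)
  finally have card_W: "card W \<le> card Q * m" by simp
  have "assigned_lists P K m Q \<phi> \<subseteq> first_cover_lists P K m Q \<phi> \<union> (\<Union>w\<in>W. G w)"
    unfolding first_cover_lists_def W_def G_def by auto
  then have "card (assigned_lists P K m Q \<phi>) \<le> card (first_cover_lists P K m Q \<phi> \<union> (\<Union>w\<in>W. G w))"
    using fin_W by (intro card_mono) (auto simp: first_cover_lists_def G_def finite_assigned_lists)
  also have "\<dots> \<le> card (first_cover_lists P K m Q \<phi>) + card (\<Union>w\<in>W. G w)"
    by (rule card_Un_le)
  also have "card (\<Union>w\<in>W. G w) \<le> (\<Sum>w\<in>W. card (G w))"
    by (rule card_UN_le[OF fin_W])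
  finally have "real (card (assigned_lists P K m Q \<phi>))
      \<le> real (card (first_cover_lists P K m Q \<phi>)) + (\<Sum>w\<in>W. real (card (G w)))"
    by (simp flip: of_nat_sum of_nat_add)
  also have "(\<Sum>w\<in>W. real (card (G w))) \<le> (\<Sum>w\<in>W. B)"
  proof (intro sum_mono)
    fix w assume "w \<in> W"
    then show "real (card (G w)) \<le> B"
      unfolding W_def G_def B_def using assms
      by (intro card_assigned_lists_extra_le) (auto simp: Pi_iff)
  qed
  also have "\<dots> = real (card W) * B" by simp
  also have "\<dots> \<le> real (card Q * m) * B"
    using card_W unfolding B_def by (intro mult_right_mono) (simp_all only: of_nat_le_iff, simp)
  finally have "real (card (assigned_lists P K m Q \<phi>))
      \<le> real (card (first_cover_lists P K m Q \<phi>)) + real (card Q) * real m * B"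
    by simp
  moreover have "real (P choose K) ^ m * ((real K - real (card Q)) / real P) ^ card Q
      \<le> real (card (assigned_lists P K m Q \<phi>))"
    using assms by (intro card_assigned_lists_ge) auto
  ultimately show ?thesis unfolding B_def by linarith
qed

lemma covering_bound_factorization:
  fixes N m K P :: real and q :: nat
  assumes "K > 0" "P > 0"
  shows "N * (m * K / P) ^ q * ((1 - q / K) ^ q - q * (m * K / P))
       = m ^ q * (N * ((K - q) / P) ^ q - q * m * (N * (K / P) ^ (q + 1)))"
proof -
  have "(m * K / P) * (1 - q / K) = m * ((K - q) / P)"
    using assms by (simp add: field_simps)
  then have e1: "(m * K / P) ^ q * (1 - q / K) ^ q = m ^ q * ((K - q) / P) ^ q"
    by (metis power_mult_distrib)
  have e2: "(m * K / P) ^ q * (q * (m * K / P)) = m ^ q * (q * m * (K / P) ^ (q + 1))"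
    by (simp add: power_mult_distrib power_divide mult_ac)
  have "N * (m * K / P) ^ q * ((1 - q / K) ^ q - q * (m * K / P))
      = N * ((m * K / P) ^ q * (1 - q / K) ^ q) - N * ((m * K / P) ^ q * (q * (m * K / P)))"
    by (simp only: right_diff_distrib mult.assoc)
  then show ?thesis unfolding e1 e2 by (simp add: algebra_simps)
qed

lemma card_covering_lists_ge:
  fixes P :: nat
  assumes "Q \<subseteq> {..<P}" "card Q = q" "q < K" "K \<le> P"
  shows "real (P choose K) ^ m * (real m * real K / real P) ^ q
           * ((1 - real q / real K) ^ q - real q * (real m * real K / real P))
       \<le> real (card {Cs \<in> ring_lists P K m. Q \<subseteq> \<Union>(set Cs)})"
proof -
  define \<Phi> where "\<Phi> = Q \<rightarrow>\<^sub>E {..<m}"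
  define N where "N = real (P choose K)"
  have fin: "finite Q" by (rule finite_subset[OF assms(1) finite_lessThan])
  have fin_\<Phi>: "finite \<Phi>" and card_\<Phi>: "card \<Phi> = m ^ q"
    unfolding \<Phi>_def using fin assms(2) by (simp_all add: finite_PiE card_PiE)
  have "N ^ m * (real m * real K / real P) ^ q * ((1 - real q / real K) ^ q - real q * (real m * real K / real P))
      = (\<Sum>\<phi>\<in>\<Phi>. N ^ m * ((real K - real q) / real P) ^ q
                  - real q * real m * (N ^ m * (real K / real P) ^ (q + 1)))"
    using assms(3,4) by (subst covering_bound_factorization) (simp_all add: card_\<Phi>)
  also have "\<dots> \<le> (\<Sum>\<phi>\<in>\<Phi>. real (card (first_cover_lists P K m Q \<phi>)))"
    using card_first_cover_lists_ge[of Q P K _ m] assms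
    by (intro sum_mono) (auto simp: N_def \<Phi>_def PiE_iff Pi_iff)
  also have "\<dots> = real (card (\<Union>\<phi>\<in>\<Phi>. first_cover_lists P K m Q \<phi>))"
    using fin_\<Phi> first_cover_lists_disjoint unfolding \<Phi>_def
    by (subst card_UN_disjoint) (auto simp: first_cover_lists_def finite_assigned_lists)
  also have "\<dots> \<le> real (card {Cs \<in> ring_lists P K m. Q \<subseteq> \<Union>(set Cs)})"
  proof (intro of_nat_mono card_mono)
    show "(\<Union>\<phi>\<in>\<Phi>. first_cover_lists P K m Q \<phi>) \<subseteq> {Cs \<in> ring_lists P K m. Q \<subseteq> \<Union>(set Cs)}"
      unfolding \<Phi>_def first_cover_lists_def assigned_lists_def ring_lists_def
      by (force simp: PiE_iff)
  qed (simp add: finite_ring_lists)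
  finally show ?thesis unfolding N_def .
qed

section \<open>Pairs of key rings sharing keys\<close>

(* The number of triples (A, B, J) of key rings A, B and a j-set J \<subseteq> A \<inter> B: there are
   P choose j sets J, each lying in (P - j) choose (K - j) key rings. *)
definition common_subset_count :: "nat \<Rightarrow> nat \<Rightarrow> nat \<Rightarrow> nat" where
  "common_subset_count P K j = (P choose j) * ((P - j) choose (K - j)) ^ 2"

lemma sum_choose_card_Int_key_rings:
  assumes "j \<le> K"
  shows "(\<Sum>p\<in>key_rings P K \<times> key_rings P K. card (fst p \<inter> snd p) choose j) = common_subset_count P K j"
proof -
  let ?R = "key_rings P K"
  let ?J = "{J. J \<subseteq> {..<P} \<and> card J = j}"
  have fin_J: "finite ?J" by (rule finite_subset[of _ "Pow {..<P}"]) auto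
  have choose_eq: "card (A \<inter> B) choose j = (\<Sum>J\<in>?J. of_bool (J \<subseteq> A) * of_bool (J \<subseteq> B))"
    if "A \<in> ?R" for A B
  proof -
    have "card (A \<inter> B) choose j = card {J. J \<subseteq> A \<inter> B \<and> card J = j}"
      using n_subsets[of "A \<inter> B" j] key_ringsD(1)[OF that] by simp
    also have "{J. J \<subseteq> A \<inter> B \<and> card J = j} = ?J \<inter> {J. J \<subseteq> A \<and> J \<subseteq> B}"
      using key_ringsD(2)[OF that] by auto
    finally show ?thesis using fin_J by (simp flip: of_bool_conj)
  qed
  have count_eq: "(\<Sum>A\<in>?R. of_bool (J \<subseteq> A)) = (P - j) choose (K - j)" if "J \<in> ?J" for J
  proof -
    have "(\<Sum>A\<in>?R. of_bool (J \<subseteq> A)) = card {A \<in> ?R. J \<subseteq> A}"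
      using finite_key_rings by (simp add: Int_def)
    also have "\<dots> = (P - j) choose (K - j)"
      using that assms card_key_rings_superset[of J P K] by auto
    finally show ?thesis .
  qed
  have "(\<Sum>p\<in>?R \<times> ?R. card (fst p \<inter> snd p) choose j) = (\<Sum>A\<in>?R. \<Sum>B\<in>?R. card (A \<inter> B) choose j)"
    by (simp add: sum.cartesian_product case_prod_beta)
  also have "\<dots> = (\<Sum>A\<in>?R. \<Sum>B\<in>?R. \<Sum>J\<in>?J. of_bool (J \<subseteq> A) * of_bool (J \<subseteq> B))"
    using choose_eq by (intro sum.cong refl) auto
  also have "\<dots> = (\<Sum>J\<in>?J. \<Sum>A\<in>?R. \<Sum>B\<in>?R. of_bool (J \<subseteq> A) * of_bool (J \<subseteq> B))"
    by (subst sum.swap, subst (2) sum.swap) (rule refl)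
  also have "\<dots> = (\<Sum>J\<in>?J. (\<Sum>A\<in>?R. of_bool (J \<subseteq> A)) * (\<Sum>B\<in>?R. of_bool (J \<subseteq> B)))"
    by (simp only: sum_product)
  also have "\<dots> = (\<Sum>J\<in>?J. ((P - j) choose (K - j)) ^ 2)"
    using count_eq by (intro sum.cong refl) (simp add: power2_eq_square)
  also have "\<dots> = common_subset_count P K j"
    using n_subsets[of "{..<P}" j] by (simp add: common_subset_count_def)
  finally show ?thesis .
qed

lemma choose_le_of_bool_eq_plus: "s choose q \<le> of_bool (s = q) + Suc q * (s choose Suc q)"
proof (cases "q < s")
  case True
  have "Suc q * (s choose Suc q) = (s - q) * (s choose q)"
    by (simp only: binomial_absorption binomial_absorb_comp)
  also have "\<dots> \<ge> s choose q" using True by simp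
  finally show ?thesis by simp
qed (auto simp: binomial_eq_0)

lemma Suc_times_common_subset_count:
  assumes "q < K" "K \<le> P"
  shows "Suc q * common_subset_count P K (Suc q) * (P - q) = common_subset_count P K q * (K - q) ^ 2"
proof -
  define D where "D = (P - Suc q) choose (K - Suc q)"
  have a: "Suc q * (P choose Suc q) = (P - q) * (P choose q)"
    by (simp only: binomial_absorption binomial_absorb_comp)
  have b: "(P - q) * D = (K - q) * ((P - q) choose (K - q))"
    using assms times_binomial_minus1_eq[of "K - q" "P - q"] by (simp add: D_def)
  have "Suc q * common_subset_count P K (Suc q) * (P - q) = (Suc q * (P choose Suc q)) * ((P - q) * D) * D"
    unfolding common_subset_count_def D_def power2_eq_square by (simp only: mult_ac)
  also have "\<dots> = (P choose q) * ((P - q) * D) * ((P - q) * D)"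
    unfolding a by (simp only: mult_ac)
  also have "\<dots> = common_subset_count P K q * (K - q) ^ 2"
    unfolding b common_subset_count_def power2_eq_square by (simp only: mult_ac)
  finally show ?thesis .
qed

lemma common_subset_count_Suc_le:
  assumes "q < K" "K \<le> P"
  shows "real (Suc q * common_subset_count P K (Suc q)) \<le> real (common_subset_count P K q) * (real K ^ 2 / real P)"
proof -
  have P_q: "real P - real q > 0" using assms by simp
  have "real (Suc q * common_subset_count P K (Suc q)) * (real P - real q)
      = real (common_subset_count P K q) * (real K - real q) ^ 2"
    using arg_cong[OF Suc_times_common_subset_count[OF assms], of real] assms
    by (simp add: of_nat_diff)
  then have "real (Suc q * common_subset_count P K (Suc q))
      = real (common_subset_count P K q) * ((real K - real q) ^ 2 / (real P - real q))"
    using P_q by (simp add: field_simps)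
  also have "(real K - real q) ^ 2 / (real P - real q) \<le> real K ^ 2 / real P"
  proof -
    have "real K ^ 2 * (real P - real q) - (real K - real q) ^ 2 * real P
        = real q * (real K * (real P - real K) + real P * (real K - real q))"
      by (simp add: power2_eq_square algebra_simps)
    also have "\<dots> \<ge> 0" using assms by (intro mult_nonneg_nonneg add_nonneg_nonneg) auto
    finally show ?thesis using P_q assms by (simp add: divide_simps)
  qed
  finally show ?thesis by (simp add: mult_left_mono)
qed

lemma card_eq_sum_of_bool: "finite A \<Longrightarrow> card {x \<in> A. P x} = (\<Sum>x\<in>A. of_bool (P x))"
  by (simp add: Int_def conj_commute)

lemma card_pairs_sharing_le:
  assumes "q \<le> K"
  shows "card {p \<in> key_rings P K \<times> key_rings P K. q \<le> card (fst p \<inter> snd p)} \<le> common_subset_count P K q"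
proof -
  let ?R = "key_rings P K"
  have "card {p \<in> ?R \<times> ?R. q \<le> card (fst p \<inter> snd p)} = (\<Sum>p\<in>?R \<times> ?R. of_bool (q \<le> card (fst p \<inter> snd p)))"
    using finite_key_rings by (simp add: card_eq_sum_of_bool)
  also have "\<dots> \<le> (\<Sum>p\<in>?R \<times> ?R. card (fst p \<inter> snd p) choose q)"
    by (intro sum_mono) (simp add: Suc_leI zero_less_binomial)
  also have "\<dots> = common_subset_count P K q"
    using assms by (rule sum_choose_card_Int_key_rings)
  finally show ?thesis .
qed

lemma card_pairs_sharing_exactly_ge:
  assumes "q < K" "K \<le> P"
  shows "real (common_subset_count P K q) * (1 - real K ^ 2 / real P)
       \<le> real (card {p \<in> key_rings P K \<times> key_rings P K. card (fst p \<inter> snd p) = q})"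
proof -
  let ?R = "key_rings P K"
  have "common_subset_count P K q = (\<Sum>p\<in>?R \<times> ?R. card (fst p \<inter> snd p) choose q)"
    using assms by (simp add: sum_choose_card_Int_key_rings)
  also have "\<dots> \<le> (\<Sum>p\<in>?R \<times> ?R. of_bool (card (fst p \<inter> snd p) = q)
                                 + Suc q * (card (fst p \<inter> snd p) choose Suc q))"
    by (intro sum_mono choose_le_of_bool_eq_plus)
  also have "\<dots> = card {p \<in> ?R \<times> ?R. card (fst p \<inter> snd p) = q} + Suc q * common_subset_count P K (Suc q)"
    using assms finite_key_rings
    by (simp add: sum.distrib card_eq_sum_of_bool sum_choose_card_Int_key_rings flip: sum_distrib_left)
  finally have "real (common_subset_count P K q)
      \<le> real (card {p \<in> ?R \<times> ?R. card (fst p \<inter> snd p) = q}) + real (Suc q * common_subset_count P K (Suc q))"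
    by linarith
  then show ?thesis
    using common_subset_count_Suc_le[OF assms] by (simp add: algebra_simps)
qed

lemma binomial_mult_fact_le: "real (n choose k) * fact k \<le> real n ^ k"
proof (cases "k \<le> n")
  case True
  then have "(\<Prod>i<k. real n - real i) \<le> (\<Prod>i<k. real n)" by (intro prod_mono) auto
  then show ?thesis by (simp add: binomial_mult_fact_real)
qed (simp add: binomial_eq_0)

lemma binomial_mult_fact_ge:
  assumes "k \<le> n"
  shows "(real n - real k) ^ k \<le> real (n choose k) * fact k"
proof -
  have "(\<Prod>i<k. real n - real k) \<le> (\<Prod>i<k. real n - real i)" using assms by (intro prod_mono) auto
  then show ?thesis by (simp add: binomial_mult_fact_real)
qed

lemma common_subset_count_le:
  assumes "q \<le> K" "K \<le> P" "0 < P"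
  shows "real (common_subset_count P K q) \<le> real (P choose K) ^ 2 * (real K ^ (2 * q) / (fact q * real P ^ q))"
proof -
  have "real (common_subset_count P K q) * fact q
      = (real (P choose q) * fact q) * real ((P - q) choose (K - q)) ^ 2"
    by (simp add: common_subset_count_def)
  also have "\<dots> \<le> real P ^ q * (real (P choose K) * (real K / real P) ^ q) ^ 2"
    using assms by (intro mult_mono power_mono binomial_mult_fact_le binomial_ratio_le) auto
  also have "\<dots> = real (P choose K) ^ 2 * (real K ^ (2 * q) / real P ^ q)"
    using assms by (simp add: power_divide power_mult_distrib power_mult field_simps power2_eq_square)
  finally show ?thesis using assms by (simp add: field_simps)
qed

lemma common_subset_count_ge:
  assumes "q < K" "K \<le> P"
  shows "real (P choose K) ^ 2 * ((1 - real q / real P) ^ q * (1 - real q / real K) ^ (2 * q))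
           * (real K ^ (2 * q) / (fact q * real P ^ q))
       \<le> real (common_subset_count P K q)"
proof -
  have K: "real K > 0" and P: "real P > 0" using assms by simp_all
  have "(1 - real q / real P) ^ q = (real P - real q) ^ q / real P ^ q"
    using P by (simp add: field_simps power_divide)
  moreover have "(1 - real q / real K) ^ (2 * q) * real K ^ (2 * q) = (real K - real q) ^ (2 * q)"
    using K by (simp add: field_simps flip: power_mult_distrib)
  ultimately have "real (P choose K) ^ 2 * ((1 - real q / real P) ^ q * (1 - real q / real K) ^ (2 * q))
           * (real K ^ (2 * q) / (fact q * real P ^ q)) * fact q
      = (real P - real q) ^ q * (real (P choose K) * ((real K - real q) / real P) ^ q) ^ 2"
    using P by (simp add: power_divide power_mult_distrib power_mult field_simps power2_eq_square)
  also have "\<dots> \<le> (real (P choose q) * fact q) * real ((P - q) choose (K - q)) ^ 2"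
    using assms by (intro mult_mono power_mono binomial_mult_fact_ge binomial_ratio_ge) auto
  also have "\<dots> = real (common_subset_count P K q) * fact q"
    by (simp add: common_subset_count_def)
  finally show ?thesis using P by (simp add: field_simps)
qed

section \<open>Bounds on the two probabilities\<close>

lemma p_s_le:
  assumes "q \<le> K" "K \<le> P" "0 < P"
  shows "p_s P K q \<le> real K ^ (2 * q) / (fact q * real P ^ q)"
proof -
  let ?R = "key_rings P K"
  have N: "real (P choose K) > 0" using assms by simp
  have "{(A, B). A \<in> ?R \<and> B \<in> ?R \<and> q \<le> card (A \<inter> B)} = {p \<in> ?R \<times> ?R. q \<le> card (fst p \<inter> snd p)}"
    by auto
  then have "p_s P K q = real (card {p \<in> ?R \<times> ?R. q \<le> card (fst p \<inter> snd p)}) / real (P choose K) ^ 2"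
    by (simp add: p_s_def card_key_rings)
  also have "\<dots> \<le> real (common_subset_count P K q) / real (P choose K) ^ 2"
    using card_pairs_sharing_le[OF assms(1)] N by (intro divide_right_mono) simp_all
  also have "\<dots> \<le> real K ^ (2 * q) / (fact q * real P ^ q)"
    using common_subset_count_le[OF assms] N by (simp add: field_simps)
  finally show ?thesis .
qed

lemma p_s_ge:
  assumes "q < K" "K \<le> P" "real K ^ 2 \<le> real P"
  shows "(1 - real K ^ 2 / real P) * ((1 - real q / real P) ^ q * (1 - real q / real K) ^ (2 * q))
           * (real K ^ (2 * q) / (fact q * real P ^ q))
       \<le> p_s P K q"
proof -
  let ?R = "key_rings P K"
  have N: "real (P choose K) > 0" using assms by simp
  have "((1 - real q / real P) ^ q * (1 - real q / real K) ^ (2 * q)) * (real K ^ (2 * q) / (fact q * real P ^ q))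
      \<le> real (common_subset_count P K q) / real (P choose K) ^ 2"
    using common_subset_count_ge[OF assms(1,2)] N by (simp add: pos_le_divide_eq mult_ac)
  then have "(1 - real K ^ 2 / real P) * ((1 - real q / real P) ^ q * (1 - real q / real K) ^ (2 * q))
           * (real K ^ (2 * q) / (fact q * real P ^ q))
      \<le> (1 - real K ^ 2 / real P) * (real (common_subset_count P K q) / real (P choose K) ^ 2)"
    unfolding mult.assoc[of "1 - real K ^ 2 / real P"] using assms by (intro mult_left_mono) simp_all
  also have "\<dots> \<le> real (card {p \<in> ?R \<times> ?R. card (fst p \<inter> snd p) = q}) / real (P choose K) ^ 2"
    using divide_right_mono[OF card_pairs_sharing_exactly_ge[OF assms(1,2)], of "real (P choose K) ^ 2"]
    by (simp add: mult.commute)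
  also have "\<dots> \<le> real (card {p \<in> ?R \<times> ?R. q \<le> card (fst p \<inter> snd p)}) / real (P choose K) ^ 2"
    using finite_key_rings by (intro divide_right_mono of_nat_mono card_mono) auto
  also have "\<dots> = p_s P K q"
  proof -
    have "{(A, B). A \<in> ?R \<and> B \<in> ?R \<and> q \<le> card (A \<inter> B)} = {p \<in> ?R \<times> ?R. q \<le> card (fst p \<inter> snd p)}"
      by auto
    then show ?thesis by (simp add: p_s_def card_key_rings)
  qed
  finally show ?thesis .
qed

lemma card_pairs_sharing_pos:
  assumes "q \<le> K" "K \<le> P"
  shows "0 < card {p \<in> key_rings P K \<times> key_rings P K. q \<le> card (fst p \<inter> snd p)}"
proof -
  have "{..<K} \<in> key_rings P K" using assms unfolding key_rings_def by auto
  then have "({..<K}, {..<K}) \<in> {p \<in> key_rings P K \<times> key_rings P K. q \<le> card (fst p \<inter> snd p)}"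
    using assms by simp
  moreover have "finite {p \<in> key_rings P K \<times> key_rings P K. q \<le> card (fst p \<inter> snd p)}"
    using finite_key_rings by simp
  ultimately show ?thesis unfolding card_gt_0_iff by blast
qed

lemma card_outcomes_filter:
  "card {(A, B, Cs) \<in> outcomes P K m. \<Phi> A B \<and> \<Psi> A B Cs}
   = (\<Sum>p\<in>{p \<in> key_rings P K \<times> key_rings P K. \<Phi> (fst p) (snd p)}.
        card {Cs \<in> ring_lists P K m. \<Psi> (fst p) (snd p) Cs})"
proof -
  let ?S = "SIGMA p:{p \<in> key_rings P K \<times> key_rings P K. \<Phi> (fst p) (snd p)}.
              {Cs \<in> ring_lists P K m. \<Psi> (fst p) (snd p) Cs}"
  have "{(A, B, Cs) \<in> outcomes P K m. \<Phi> A B \<and> \<Psi> A B Cs} = (\<lambda>((A, B), Cs). (A, B, Cs)) ` ?S"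
    by (auto simp: outcomes_def ring_lists_def image_iff)
  moreover have "inj_on (\<lambda>((A, B), Cs). (A, B, Cs)) ?S" by (auto simp: inj_on_def)
  ultimately show ?thesis
    using finite_key_rings finite_ring_lists by (simp add: card_image)
qed

lemma p_compromised_eq:
  fixes P K q m :: nat
  defines "S \<equiv> {p \<in> key_rings P K \<times> key_rings P K. q \<le> card (fst p \<inter> snd p)}"
  shows "p_compromised P K q m
       = (\<Sum>p\<in>S. real (card {Cs \<in> ring_lists P K m. fst p \<inter> snd p \<subseteq> \<Union>(set Cs)}))
         / (real (card S) * real (P choose K) ^ m)"
proof -
  have "{(A, B, Cs) \<in> outcomes P K m. q \<le> card (A \<inter> B)}
      = {(A, B, Cs) \<in> outcomes P K m. q \<le> card (A \<inter> B) \<and> True}" by simp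
  then have "card {(A, B, Cs) \<in> outcomes P K m. q \<le> card (A \<inter> B)} = card S * (P choose K) ^ m"
    using card_outcomes_filter[of P K m "\<lambda>A B. q \<le> card (A \<inter> B)" "\<lambda>_ _ _. True"]
    by (simp add: S_def card_ring_lists)
  moreover have "card {(A, B, Cs) \<in> outcomes P K m. q \<le> card (A \<inter> B) \<and> A \<inter> B \<subseteq> \<Union>(set Cs)}
      = (\<Sum>p\<in>S. card {Cs \<in> ring_lists P K m. fst p \<inter> snd p \<subseteq> \<Union>(set Cs)})"
    unfolding S_def by (rule card_outcomes_filter)
  ultimately show ?thesis by (simp add: p_compromised_def)
qed

lemma p_compromised_le:
  assumes "q \<le> K" "K \<le> P"
  shows "p_compromised P K q m \<le> (real m * real K / real P) ^ q"
proof -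
  define S where "S = {p \<in> key_rings P K \<times> key_rings P K. q \<le> card (fst p \<inter> snd p)}"
  define B where "B = real (P choose K) ^ m * (real m * real K / real P) ^ q"
  have cover: "real (card {Cs \<in> ring_lists P K m. fst p \<inter> snd p \<subseteq> \<Union>(set Cs)}) \<le> B"
    if "p \<in> S" for p
  proof -
    have "fst p \<inter> snd p \<subseteq> {..<P}" "q \<le> card (fst p \<inter> snd p)"
      using that key_ringsD(2)[of "fst p" P K] unfolding S_def by auto
    then obtain Q where Q: "Q \<subseteq> fst p \<inter> snd p" "card Q = q"
      by (meson obtain_subset_with_card_n)
    have "card {Cs \<in> ring_lists P K m. fst p \<inter> snd p \<subseteq> \<Union>(set Cs)}
        \<le> card {Cs \<in> ring_lists P K m. Q \<subseteq> \<Union>(set Cs)}"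
      using Q(1) finite_ring_lists by (intro card_mono) auto
    also have "real \<dots> \<le> B"
      unfolding B_def using card_covering_lists_le[of Q P K m] Q \<open>fst p \<inter> snd p \<subseteq> {..<P}\<close> assms
      by auto
    finally show ?thesis by simp
  qed
  have pos: "real (card S) * real (P choose K) ^ m > 0"
    using card_pairs_sharing_pos[OF assms] assms unfolding S_def by simp
  have "(\<Sum>p\<in>S. real (card {Cs \<in> ring_lists P K m. fst p \<inter> snd p \<subseteq> \<Union>(set Cs)})) \<le> real (card S) * B"
    using sum_mono[OF cover] by simp
  then show ?thesis
    unfolding p_compromised_eq S_def[symmetric] using pos by (simp add: B_def pos_divide_le_eq mult_ac)
qed

lemma sum_card_covering_lists_ge:
  fixes P K q m :: nat
  defines "S \<equiv> {p \<in> key_rings P K \<times> key_rings P K. q \<le> card (fst p \<inter> snd p)}"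
    and "L \<equiv> real (P choose K) ^ m * (real m * real K / real P) ^ q
               * ((1 - real q / real K) ^ q - real q * (real m * real K / real P))"
  assumes qK: "q < K" and KP: "K \<le> P" and "real K ^ 2 \<le> real P" and L: "0 \<le> L"
  shows "real (card S) * (1 - real K ^ 2 / real P) * L
       \<le> (\<Sum>p\<in>S. real (card {Cs \<in> ring_lists P K m. fst p \<inter> snd p \<subseteq> \<Union>(set Cs)}))"
proof -
  define E where "E = {p \<in> key_rings P K \<times> key_rings P K. card (fst p \<inter> snd p) = q}"
  define cov where "cov p = real (card {Cs \<in> ring_lists P K m. fst p \<inter> snd p \<subseteq> \<Union>(set Cs)})" for p
  have cover: "L \<le> cov p" if "p \<in> E" for p
  proof -
    have "fst p \<inter> snd p \<subseteq> {..<P}" "card (fst p \<inter> snd p) = q"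
      using that key_ringsD(2)[of "fst p" P K] unfolding E_def by auto
    then show ?thesis
      unfolding L_def cov_def using assms by (intro card_covering_lists_ge) auto
  qed
  have "real (card S) * (1 - real K ^ 2 / real P) * L
      \<le> real (common_subset_count P K q) * (1 - real K ^ 2 / real P) * L"
    using card_pairs_sharing_le[of q K P] assms unfolding S_def
    by (intro mult_right_mono) auto
  also have "\<dots> \<le> real (card E) * L"
    using card_pairs_sharing_exactly_ge[OF qK KP] L unfolding E_def
    by (intro mult_right_mono) auto
  also have "\<dots> \<le> (\<Sum>p\<in>E. cov p)"
    using sum_mono[OF cover] by simp
  also have "\<dots> \<le> (\<Sum>p\<in>S. cov p)"
    unfolding E_def S_def cov_def using finite_key_rings by (intro sum_mono2) auto
  finally show ?thesis unfolding cov_def .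
qed

lemma p_compromised_ge:
  assumes "q < K" "K \<le> P" "real K ^ 2 \<le> real P"
  shows "(1 - real K ^ 2 / real P) * ((1 - real q / real K) ^ q - real q * (real m * real K / real P))
           * (real m * real K / real P) ^ q
       \<le> p_compromised P K q m"
proof (cases "0 \<le> (1 - real q / real K) ^ q - real q * (real m * real K / real P)")
  case False
  moreover have "0 \<le> 1 - real K ^ 2 / real P" using assms by simp
  ultimately have "(1 - real K ^ 2 / real P) * ((1 - real q / real K) ^ q - real q * (real m * real K / real P))
           * (real m * real K / real P) ^ q \<le> 0"
    by (intro mult_nonpos_nonneg mult_nonneg_nonpos) auto
  also have "0 \<le> p_compromised P K q m" by (simp add: p_compromised_def)
  finally show ?thesis .
next
  case True
  define S where "S = {p \<in> key_rings P K \<times> key_rings P K. q \<le> card (fst p \<inter> snd p)}"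
  have pos: "real (card S) * real (P choose K) ^ m > 0"
    using card_pairs_sharing_pos[of q K P] assms unfolding S_def by simp
  have "(1 - real K ^ 2 / real P) * ((1 - real q / real K) ^ q - real q * (real m * real K / real P))
          * (real m * real K / real P) ^ q * (real (card S) * real (P choose K) ^ m)
      = real (card S) * (1 - real K ^ 2 / real P) * (real (P choose K) ^ m * (real m * real K / real P) ^ q
          * ((1 - real q / real K) ^ q - real q * (real m * real K / real P)))"
    by (simp only: mult_ac)
  also have "\<dots> \<le> (\<Sum>p\<in>S. real (card {Cs \<in> ring_lists P K m. fst p \<inter> snd p \<subseteq> \<Union>(set Cs)}))"
    unfolding S_def using assms True by (intro sum_card_covering_lists_ge) auto
  finally show ?thesis
    unfolding p_compromised_eq S_def[symmetric] using pos by (simp add: pos_le_divide_eq)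
qed

section \<open>Asymptotics\<close>

lemma asymp_equiv_sandwich_factors:
  fixes f g l u :: "'a \<Rightarrow> real"
  assumes "(l \<longlongrightarrow> 1) F" "(u \<longlongrightarrow> 1) F"
    and "eventually (\<lambda>x. l x * g x \<le> f x \<and> f x \<le> u x * g x) F"
  shows "f \<sim>[F] g"
proof (rule asymp_equiv_sandwich_real)
  have "(\<lambda>x. l x * g x) \<sim>[F] (\<lambda>x. 1 * g x)"
    using tendsto_imp_asymp_equiv_const[OF assms(1)] by (intro asymp_equiv_mult) simp_all
  then show "(\<lambda>x. l x * g x) \<sim>[F] g" by simp
  have "(\<lambda>x. u x * g x) \<sim>[F] (\<lambda>x. 1 * g x)"
    using tendsto_imp_asymp_equiv_const[OF assms(2)] by (intro asymp_equiv_mult) simp_all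
  then show "(\<lambda>x. u x * g x) \<sim>[F] g" by simp
  show "eventually (\<lambda>x. f x \<in> {l x * g x..u x * g x}) F" using assms(3) by simp
qed

lemma eventually_key_ring_regime:
  fixes P K :: "'a \<Rightarrow> nat"
  assumes "filterlim (\<lambda>x. real (K x)) at_top F" "((\<lambda>x. real (K x) ^ 2 / real (P x)) \<longlongrightarrow> 0) F"
    and "eventually (\<lambda>x. K x \<le> P x) F"
  shows "eventually (\<lambda>x. q < K x \<and> real (K x) ^ 2 \<le> real (P x)) F"
proof -
  have "eventually (\<lambda>x. real q < real (K x)) F"
    using assms(1) unfolding filterlim_at_top_dense by blast
  moreover have "eventually (\<lambda>x. real (K x) ^ 2 / real (P x) < 1) F"
    using assms(2) by (rule order_tendstoD) simp
  ultimately show ?thesis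
    using assms(3) by eventually_elim (auto simp: field_simps split: if_splits)
qed

lemma p_compromised_asymp_equiv:
  fixes P K m :: "'a \<Rightarrow> nat"
  assumes "filterlim (\<lambda>x. real (K x)) at_top F" "((\<lambda>x. real (K x) ^ 2 / real (P x)) \<longlongrightarrow> 0) F"
    and "((\<lambda>x. real (m x) * real (K x) / real (P x)) \<longlongrightarrow> 0) F"
    and "eventually (\<lambda>x. K x \<le> P x) F"
  shows "(\<lambda>x. p_compromised (P x) (K x) q (m x)) \<sim>[F] (\<lambda>x. (real (m x) * real (K x) / real (P x)) ^ q)"
proof (rule asymp_equiv_sandwich_factors)
  have "((\<lambda>x. real q / real (K x)) \<longlongrightarrow> 0) F"
    using assms(1) by (intro tendsto_divide_0[OF tendsto_const] filterlim_at_top_imp_at_infinity)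
  then have "((\<lambda>x. (1 - real (K x) ^ 2 / real (P x))
                * ((1 - real q / real (K x)) ^ q - real q * (real (m x) * real (K x) / real (P x))))
            \<longlongrightarrow> (1 - 0) * ((1 - 0) ^ q - real q * 0)) F"
    by (intro tendsto_intros assms(2,3))
  then show "((\<lambda>x. (1 - real (K x) ^ 2 / real (P x))
                * ((1 - real q / real (K x)) ^ q - real q * (real (m x) * real (K x) / real (P x))))
            \<longlongrightarrow> 1) F"
    by simp
  show "((\<lambda>x. 1) \<longlongrightarrow> 1) F" by simp
  show "\<forall>\<^sub>F x in F. (1 - real (K x) ^ 2 / real (P x))
                * ((1 - real q / real (K x)) ^ q - real q * (real (m x) * real (K x) / real (P x)))
                * (real (m x) * real (K x) / real (P x)) ^ q \<le> p_compromised (P x) (K x) q (m x)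
           \<and> p_compromised (P x) (K x) q (m x) \<le> 1 * (real (m x) * real (K x) / real (P x)) ^ q"
    using eventually_key_ring_regime[OF assms(1,2,4), of q] assms(4)
  proof eventually_elim
    case (elim x)
    then show ?case
      using p_compromised_ge[of q "K x" "P x" "m x"] p_compromised_le[of q "K x" "P x" "m x"] by simp
  qed
qed

lemma p_s_asymp_equiv:
  fixes P K :: "'a \<Rightarrow> nat"
  assumes "filterlim (\<lambda>x. real (K x)) at_top F" "((\<lambda>x. real (K x) ^ 2 / real (P x)) \<longlongrightarrow> 0) F"
    and "eventually (\<lambda>x. K x \<le> P x) F"
  shows "(\<lambda>x. p_s (P x) (K x) q) \<sim>[F] (\<lambda>x. real (K x) ^ (2 * q) / (fact q * real (P x) ^ q))"
proof (rule asymp_equiv_sandwich_factors)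
  have "filterlim (\<lambda>x. real (P x)) at_top F"
    using assms(1) by (rule filterlim_at_top_mono) (use assms(3) in \<open>auto elim: eventually_mono\<close>)
  then have "((\<lambda>x. real q / real (P x)) \<longlongrightarrow> 0) F" "((\<lambda>x. real q / real (K x)) \<longlongrightarrow> 0) F"
    using assms(1) by (auto intro!: tendsto_divide_0[OF tendsto_const] filterlim_at_top_imp_at_infinity)
  then have "((\<lambda>x. (1 - real (K x) ^ 2 / real (P x))
                * ((1 - real q / real (P x)) ^ q * (1 - real q / real (K x)) ^ (2 * q)))
            \<longlongrightarrow> (1 - 0) * ((1 - 0) ^ q * (1 - 0) ^ (2 * q))) F"
    by (intro tendsto_intros assms(2))
  then show "((\<lambda>x. (1 - real (K x) ^ 2 / real (P x))
                * ((1 - real q / real (P x)) ^ q * (1 - real q / real (K x)) ^ (2 * q)))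
            \<longlongrightarrow> 1) F"
    by simp
  show "((\<lambda>x. 1) \<longlongrightarrow> 1) F" by simp
  show "\<forall>\<^sub>F x in F. (1 - real (K x) ^ 2 / real (P x))
                * ((1 - real q / real (P x)) ^ q * (1 - real q / real (K x)) ^ (2 * q))
                * (real (K x) ^ (2 * q) / (fact q * real (P x) ^ q)) \<le> p_s (P x) (K x) q
           \<and> p_s (P x) (K x) q \<le> 1 * (real (K x) ^ (2 * q) / (fact q * real (P x) ^ q))"
    using eventually_key_ring_regime[OF assms, of q] assms(3)
  proof eventually_elim
    case (elim x)
    then show ?case using p_s_ge[of q "K x" "P x"] p_s_le[of q "K x" "P x"] by simp
  qed
qed

lemma key_ring_ratios_tendsto_0:
  fixes P K m :: "'a \<Rightarrow> nat"
  assumes "\<And>x. 1 \<le> m x" "\<And>x. 1 \<le> K x"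
    and "(\<lambda>x. real (m x)) \<in> o[F](\<lambda>x. sqrt (real (P x) / real (K x) ^ 2))"
  shows "((\<lambda>x. real (K x) ^ 2 / real (P x)) \<longlongrightarrow> 0) F"
    and "((\<lambda>x. real (m x) * real (K x) / real (P x)) \<longlongrightarrow> 0) F"
proof -
  define g where "g x = (real (m x) * real (K x)) ^ 2 / real (P x)" for x
  have "((\<lambda>x. (real (m x) / sqrt (real (P x) / real (K x) ^ 2)) ^ 2) \<longlongrightarrow> 0 ^ 2) F"
    by (intro tendsto_power smalloD_tendsto assms(3))
  moreover have "(real (m x) / sqrt (real (P x) / real (K x) ^ 2)) ^ 2 = g x" for x
    by (simp add: g_def power_divide power_mult_distrib)
  ultimately have g: "(g \<longlongrightarrow> 0) F" by simp
  have mK: "1 \<le> real (m x) * real (K x)" for x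
    using assms(1,2)[of x] mult_mono[of 1 "real (m x)" 1 "real (K x)"] by simp
  show "((\<lambda>x. real (K x) ^ 2 / real (P x)) \<longlongrightarrow> 0) F"
  proof (rule tendsto_sandwich[OF _ _ tendsto_const g])
    have "real (K x) ^ 2 \<le> (real (m x) * real (K x)) ^ 2" for x
      using assms(1)[of x] mult_right_mono[of 1 "real (m x) ^ 2" "real (K x) ^ 2"]
      by (simp add: power_mult_distrib one_le_power)
    then show "\<forall>\<^sub>F x in F. real (K x) ^ 2 / real (P x) \<le> g x"
      unfolding g_def by (intro always_eventually allI divide_right_mono) simp_all
  qed simp
  show "((\<lambda>x. real (m x) * real (K x) / real (P x)) \<longlongrightarrow> 0) F"
  proof (rule tendsto_sandwich[OF _ _ tendsto_const g])
    have "real (m x) * real (K x) \<le> (real (m x) * real (K x)) ^ 2" for x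
      using mK[of x] mult_left_mono[of 1 "real (m x) * real (K x)" "real (m x) * real (K x)"]
      by (simp add: power2_eq_square)
    then show "\<forall>\<^sub>F x in F. real (m x) * real (K x) / real (P x) \<le> g x"
      unfolding g_def by (intro always_eventually allI divide_right_mono) simp_all
  qed simp
qed

lemma compromise_ratio_eq:
  fixes m K P :: real and q :: nat
  assumes "K > 0" "P > 0"
  shows "(m * K / P) ^ q / (K ^ (2 * q) / (fact q * P ^ q)) = fact q * (m / K) ^ q"
  using assms by (simp add: power_mult_distrib power_divide power_mult field_simps power2_eq_square)

theorem theorem2:
  fixes P K m :: "nat \<Rightarrow> nat" and q :: nat
  assumes "q \<ge> 1"
    and "\<And>n. q \<le> K n \<and> K n \<le> P n"
    and "\<And>n. m n \<ge> 1"
    and "(\<lambda>n. real (m n)) \<in> o(\<lambda>n. sqrt (real (P n) / real (K n) ^ 2))"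
    and "filterlim (\<lambda>n. real (K n)) at_top sequentially"
  shows "((\<lambda>n. p_compromised (P n) (K n) q (m n))
           \<sim>[sequentially] (\<lambda>n. (real (m n) * real (K n) / real (P n)) ^ q)) \<and>
         ((\<lambda>n. p_compromised (P n) (K n) q (m n) / p_s (P n) (K n) q)
           \<sim>[sequentially] (\<lambda>n. fact q * (real (m n) / real (K n)) ^ q))"
proof -
  have K: "1 \<le> K n" for n using assms(1) assms(2)[of n] by linarith
  have P: "0 < P n" for n using K[of n] assms(2)[of n] by linarith
  have KP: "eventually (\<lambda>n. K n \<le> P n) sequentially" using assms(2) by simp
  note ratios = key_ring_ratios_tendsto_0[OF assms(3) K assms(4)]
  have p_c: "(\<lambda>n. p_compromised (P n) (K n) q (m n)) \<sim>[sequentially] (\<lambda>n. (real (m n) * real (K n) / real (P n)) ^ q)"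
    by (rule p_compromised_asymp_equiv[OF assms(5) ratios KP])
  have "(\<lambda>n. p_compromised (P n) (K n) q (m n) / p_s (P n) (K n) q)
      \<sim>[sequentially] (\<lambda>n. (real (m n) * real (K n) / real (P n)) ^ q
                               / (real (K n) ^ (2 * q) / (fact q * real (P n) ^ q)))"
    using p_c p_s_asymp_equiv[OF assms(5) ratios(1) KP] by (rule asymp_equiv_divide)
  also have "(\<lambda>n. (real (m n) * real (K n) / real (P n)) ^ q / (real (K n) ^ (2 * q) / (fact q * real (P n) ^ q)))
      = (\<lambda>n. fact q * (real (m n) / real (K n)) ^ q)"
    using K P by (intro ext compromise_ratio_eq) (simp_all add: Suc_le_eq)
  finally show ?thesis using p_c by blast
qed

end
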